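(* For any $\delta\le1/4$, if $\mathcal{I}=([n],[m],\mathcal{V})$ is a $\delta$-ONI instance, then $m\ge 2n$.
   Context: Valuations are additive. $\mathrm{MMS}_i$ is the maximum over partitions of the goods into $n$ bundles of the minimum bundle value for agent $i$. The instance is ordered if $v_i(1)\ge\dots\ge v_i(m)$ for all $i$; normalized if every agent $i$ has an MMS partition into $n$ bundles each of value exactly $1$ to $i$; $\alpha$-irreducible if for every agent $i$: $v_i(1)<\alpha$, $v_i(\{2n-1,2n,2n+1\})<\alpha$, $v_i(\{3n-2,3n-1,3n,3n+1\})<\alpha$, $v_i(\{1,2n+1\})<\alpha$ (each condition only when the goods exist). $\delta$-ONI means ordered, normalized and $(3/4+\delta)$-irreducible. *)

theory Defs
  imports Complex_Main
begin

text \<open>An instance with agents 1..n and goods 1..m; v i j is the value of good j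
  to agent i (nonnegative, since items are goods). Valuations are additive.\<close>

definition val :: "(nat \<Rightarrow> nat \<Rightarrow> real) \<Rightarrow> nat \<Rightarrow> nat set \<Rightarrow> real" where
  "val v i S = (\<Sum>j\<in>S. v i j)"

definition goods_instance :: "nat \<Rightarrow> nat \<Rightarrow> (nat \<Rightarrow> nat \<Rightarrow> real) \<Rightarrow> bool" where
  "goods_instance n m v \<longleftrightarrow> (\<forall>i\<in>{1..n}. \<forall>j\<in>{1..m}. 0 \<le> v i j)"

definition is_partition :: "nat \<Rightarrow> nat \<Rightarrow> (nat \<Rightarrow> nat set) \<Rightarrow> bool" where
  "is_partition n m P \<longleftrightarrow>
     (\<Union>k\<in>{1..n}. P k) = {1..m} \<and>
     (\<forall>k\<in>{1..n}. \<forall>l\<in>{1..n}. k \<noteq> l \<longrightarrow> P k \<inter> P l = {})"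

definition min_bundle :: "(nat \<Rightarrow> nat \<Rightarrow> real) \<Rightarrow> nat \<Rightarrow> nat \<Rightarrow> (nat \<Rightarrow> nat set) \<Rightarrow> real" where
  "min_bundle v n i P = Min ((\<lambda>k. val v i (P k)) ` {1..n})"

definition MMS :: "(nat \<Rightarrow> nat \<Rightarrow> real) \<Rightarrow> nat \<Rightarrow> nat \<Rightarrow> nat \<Rightarrow> real" where
  "MMS v n m i = (SUP P \<in> {P. is_partition n m P}. min_bundle v n i P)"

definition is_MMS_partition :: "(nat \<Rightarrow> nat \<Rightarrow> real) \<Rightarrow> nat \<Rightarrow> nat \<Rightarrow> nat \<Rightarrow> (nat \<Rightarrow> nat set) \<Rightarrow> bool" where
  "is_MMS_partition v n m i P \<longleftrightarrow> is_partition n m P \<and> min_bundle v n i P = MMS v n m i"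

definition ordered :: "nat \<Rightarrow> nat \<Rightarrow> (nat \<Rightarrow> nat \<Rightarrow> real) \<Rightarrow> bool" where
  "ordered n m v \<longleftrightarrow> (\<forall>i\<in>{1..n}. \<forall>j. 1 \<le> j \<and> j < m \<longrightarrow> v i j \<ge> v i (Suc j))"

definition normalized :: "nat \<Rightarrow> nat \<Rightarrow> (nat \<Rightarrow> nat \<Rightarrow> real) \<Rightarrow> bool" where
  "normalized n m v \<longleftrightarrow> (\<forall>i\<in>{1..n}. \<exists>P. is_MMS_partition v n m i P \<and>
       (\<forall>k\<in>{1..n}. val v i (P k) = 1))"

definition irreducible :: "real \<Rightarrow> nat \<Rightarrow> nat \<Rightarrow> (nat \<Rightarrow> nat \<Rightarrow> real) \<Rightarrow> bool" where
  "irreducible \<alpha> n m v \<longleftrightarrow> (\<forall>i\<in>{1..n}.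
      (1 \<le> m \<longrightarrow> v i 1 < \<alpha>) \<and>
      (2*n+1 \<le> m \<longrightarrow> val v i {2*n-1, 2*n, 2*n+1} < \<alpha>) \<and>
      (3*n+1 \<le> m \<longrightarrow> val v i {3*n-2, 3*n-1, 3*n, 3*n+1} < \<alpha>) \<and>
      (2*n+1 \<le> m \<longrightarrow> val v i {1, 2*n+1} < \<alpha>))"

definition ONI :: "real \<Rightarrow> nat \<Rightarrow> nat \<Rightarrow> (nat \<Rightarrow> nat \<Rightarrow> real) \<Rightarrow> bool" where
  "ONI \<delta> n m v \<longleftrightarrow> ordered n m v \<and> normalized n m v \<and> irreducible (3/4 + \<delta>) n m v"

end

theory Submission
  imports Defs
begin

text \<open>Take agent 1 and one of its MMS partitions with all bundles worth exactly 1.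
  By irreducibility and ordering every single good is worth less than \<open>3/4 + \<delta> \<le> 1\<close>
  to agent 1, so no bundle of value 1 can have fewer than two goods; as the \<open>n\<close>
  bundles are disjoint and cover the \<open>m\<close> goods, \<open>m \<ge> 2 n\<close>.\<close>

lemma ordered_le_first:
  assumes "ordered n m v" and "i \<in> {1..n}" and "j \<in> {1..m}"
  shows "v i j \<le> v i 1"
proof -
  from assms(3) have "1 \<le> j" and "j \<le> m" by auto
  then show ?thesis
  proof (induction j rule: dec_induct)
    case (step j)
    then have "v i (Suc j) \<le> v i j" "v i j \<le> v i 1"
      using assms(1,2) by (auto simp: ordered_def)
    then show ?case by linarith
  qed simp
qed

lemma two_le_card_if_elements_small:
  fixes f :: "'a \<Rightarrow> real"
  assumes "finite S" and "0 < c" and "\<And>x. x \<in> S \<Longrightarrow> f x < c" and "c \<le> sum f S"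
  shows "2 \<le> card S"
proof (rule ccontr)
  assume "\<not> 2 \<le> card S"
  then consider "S = {}" | x where "S = {x}"
    using assms(1) by (metis One_nat_def card_1_singletonE card_0_eq less_2_cases not_le)
  then show False
    using assms by cases auto
qed

lemma card_ge_if_partition_bundles_ge:
  assumes "is_partition n m P" and "\<And>k. k \<in> {1..n} \<Longrightarrow> c \<le> card (P k)"
  shows "c * n \<le> m"
proof -
  have cover: "(\<Union>k\<in>{1..n}. P k) = {1..m}"
    using assms(1) by (simp add: is_partition_def)
  then have fin: "finite (P k)" if "k \<in> {1..n}" for k
    using that by (metis UN_upper finite_atLeastAtMost finite_subset)
  have "c * n = (\<Sum>k\<in>{1..n}. c)" by simp
  also have "\<dots> \<le> (\<Sum>k\<in>{1..n}. card (P k))"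
    by (rule sum_mono) (rule assms(2))
  also have "\<dots> = card (\<Union>k\<in>{1..n}. P k)"
    using assms(1) fin by (intro card_UN_disjoint[symmetric]) (auto simp: is_partition_def)
  also have "\<dots> = m" using cover by simp
  finally show ?thesis .
qed

theorem mainTheorem13:
  fixes \<delta> :: real and n m :: nat and v :: "nat \<Rightarrow> nat \<Rightarrow> real"
  assumes "\<delta> \<le> 1/4"
    and "goods_instance n m v"
    and "ONI \<delta> n m v"
  shows "m \<ge> 2 * n"
proof (cases "n = 0")
  case False
  then have agent: "1 \<in> {1..n}" by simp
  obtain P where P: "is_partition n m P" and worth_one: "\<And>k. k \<in> {1..n} \<Longrightarrow> val v 1 (P k) = 1"
    using assms(3) agent unfolding ONI_def normalized_def is_MMS_partition_def by blast
  have good_small: "v 1 j < 1" if "j \<in> {1..m}" for j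
  proof -
    have "v 1 j \<le> v 1 1"
      using assms(3) agent that by (intro ordered_le_first) (auto simp: ONI_def)
    moreover have "v 1 1 < 3/4 + \<delta>"
      using assms(3) agent that by (auto simp: ONI_def irreducible_def)
    ultimately show ?thesis using assms(1) by linarith
  qed
  have bundle_goods: "P k \<subseteq> {1..m}" if "k \<in> {1..n}" for k
    using P that by (auto simp: is_partition_def)
  have "2 \<le> card (P k)" if "k \<in> {1..n}" for k
    using bundle_goods[OF that] worth_one[OF that] good_small
    by (intro two_le_card_if_elements_small[where f = "v 1" and c = 1])
       (auto simp: val_def intro: finite_subset)
  then show ?thesis
    using card_ge_if_partition_bundles_ge[OF P] by simp
qed simp

end
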